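(* Consider the model and approximate SIR $\widetilde{\mathsf{SIR}}_L$ in the context with $\alpha=4$, $p=q=1$ and $L\ge2$. If $\beta<\frac{\gamma}{L-1}$, then $$\mathbb{P}\left(\widetilde{\mathsf{SIR}}_L\ge\frac{\beta}{\gamma}\right)=\int_0^{\sqrt{\frac{\gamma/\beta-(L-1)}{\pi\lambda}}}\left(1-\frac{1}{\sqrt{\gamma/\beta-\pi\lambda r^2+\frac{(L-2)^2}{4}}-\frac{L-2}{2}}\right)^{L-1}f_{R_L}(r)\,dr,$$ where $f_{R_L}(r)=e^{-\lambda\pi r^2}\frac{2(\lambda\pi r^2)^L}{r\,(L-1)!}$; and if $\beta\ge\frac{\gamma}{L-1}$ this probability is $0$.
   Context: Let $\Phi$ be a homogeneous Poisson point process on $\mathbb{R}^2$ of intensity $\lambda>0$ (base stations), user at the origin $o$; label points in increasing distance as $x_1,x_2,\dots$, $R_k=\|x_k\|$. Fix an integer $L\ge2$, $\alpha>2$, $\gamma>0$, $\beta>0$, $p\in[0,1]$, $q\in(0,1]$. Independently of $\Phi$ let $a_1,\dots,a_{L-1}$ be i.i.d. Bernoulli($p$), $\Omega=\sum_{i=1}^{L-1}a_i$; when $\Omega\ge1$, $\hat R_1$ is the smallest distance from $o$ among the $x_i$ with $i\le L-1$, $a_i=1$. Approximate SIR (dominant-interferer approximation, interference-limited): if $\Omega\ge1$, $$\widetilde{\mathsf{SIR}}_L=\frac{R_L^{-\alpha}}{\hat R_1^{-\alpha}+\frac{2(\Omega-1)}{2-\alpha}\cdot\frac{R_L^{2-\alpha}-\hat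 R_1^{2-\alpha}}{R_L^2-\hat R_1^2}+\frac{2\pi q\lambda}{\alpha-2}R_L^{2-\alpha}},$$ and if $\Omega=0$, $\widetilde{\mathsf{SIR}}_L=\frac{R_L^{-\alpha}}{\frac{2\pi q\lambda}{\alpha-2}R_L^{2-\alpha}}$. *)

theory Defs
  imports "HOL-Probability.Probability"
begin

text \<open>Homogeneous Poisson point process on the plane (real \<times> real, Euclidean norm),
  modelled as a random locally finite set of points \<Phi> \<omega> (a simple point process)
  on a probability space M, with Poisson(\<lambda>|A|) counts on bounded Borel sets and
  independent counts on disjoint bounded Borel sets.\<close>

definition poisson_pp :: "'w measure \<Rightarrow> real \<Rightarrow> ('w \<Rightarrow> (real \<times> real) set) \<Rightarrow> bool" where
  "poisson_pp M lam Phi \<longleftrightarrow>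
     prob_space M \<and>
     (\<forall>\<omega>\<in>space M. \<forall>A. bounded A \<longrightarrow> finite (Phi \<omega> \<inter> A)) \<and>
     (\<forall>A \<in> sets lborel. bounded A \<longrightarrow>
        (\<lambda>\<omega>. card (Phi \<omega> \<inter> A)) \<in> measurable M (count_space UNIV) \<and>
        (\<forall>k::nat. measure M {\<omega> \<in> space M. card (Phi \<omega> \<inter> A) = k}
            = (lam * measure lborel A) ^ k / fact k * exp (- (lam * measure lborel A)))) \<and>
     (\<forall>(I::nat set) (A::nat \<Rightarrow> (real \<times> real) set). finite I \<longrightarrow> disjoint_family_on A I \<longrightarrow>
        (\<forall>i\<in>I. A i \<in> sets lborel \<and> bounded (A i)) \<longrightarrow>
        prob_space.indep_vars M (\<lambda>_. count_space UNIV) (\<lambda>i \<omega>. card (Phi \<omega> \<inter> A i)) I)"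

definition kth_dist :: "(real \<times> real) set \<Rightarrow> nat \<Rightarrow> real" where
  "kth_dist S k = Inf {r. 0 \<le> r \<and> k \<le> card (S \<inter> cball 0 r)}"

text \<open>Approximate SIR (dominant interferer approximation) for general parameters, given
  \<Omega> (number of active among the L-1 closest BSs), hat R_1 and R_L.\<close>
definition sir_approx :: "real \<Rightarrow> real \<Rightarrow> real \<Rightarrow> nat \<Rightarrow> real \<Rightarrow> real \<Rightarrow> real" where
  "sir_approx \<alpha> q lam \<Omega> hR1 RL =
     (if \<Omega> \<ge> 1 then
        RL powr (-\<alpha>) /
          (hR1 powr (-\<alpha>)
           + 2 * (real \<Omega> - 1) / (2 - \<alpha>) * ((RL powr (2 - \<alpha>) - hR1 powr (2 - \<alpha>)) / (RL^2 - hR1^2))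
           + 2 * pi * q * lam / (\<alpha> - 2) * RL powr (2 - \<alpha>))
      else RL powr (-\<alpha>) / (2 * pi * q * lam / (\<alpha> - 2) * RL powr (2 - \<alpha>)))"

end

theory Submission
  imports Defs
begin

text \<open>Write \<open>U\<^sub>k = \<lambda>\<pi>R\<^sub>k\<^sup>2\<close>. By the Poisson property, \<open>a < U\<^sub>1 \<and> U\<^sub>L \<le> b\<close> means that the disc
  of mass \<open>a\<close> is empty and the annulus of mass \<open>b - a\<close> around it holds at least \<open>L\<close> points, so
  \<open>P(a < U\<^sub>1, U\<^sub>L \<le> b) = exp (-a) \<cdot> erlang_CDF (L - 1) 1 (b - a)\<close> and \<open>(U\<^sub>1, U\<^sub>L)\<close> has density
  \<open>(v - u)^(L - 2) exp (-v) / (L - 2)!\<close> on \<open>0 < u < v\<close>.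
  For \<open>\<alpha> = 4\<close> and all \<open>L - 1\<close> nearer stations active, the approximate SIR equals
  \<open>1 / (t\<^sup>2 + (L - 2) t + U\<^sub>L)\<close> with \<open>t = U\<^sub>L / U\<^sub>1\<close>, so \<open>SIR \<ge> \<beta>/\<gamma>\<close> means \<open>U\<^sub>1 \<ge> U\<^sub>L / T(U\<^sub>L)\<close>,
  where \<open>T\<close> is the positive root of the quadratic; \<open>T(v) > 1\<close> exactly when \<open>v < \<gamma>/\<beta> - (L - 1)\<close>.
  Integrating out \<open>U\<^sub>1\<close> leaves \<open>exp (-v) v^(L - 1) (1 - 1/T(v))^(L - 1) / (L - 1)!\<close> on
  \<open>(0, \<gamma>/\<beta> - (L - 1))\<close>, an interval that is empty when \<open>\<beta> \<ge> \<gamma>/(L - 1)\<close>; the substitution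
  \<open>v = \<lambda>\<pi>r\<^sup>2\<close> gives the stated integral.\<close>

section \<open>Distance to the k-th nearest point\<close>

lemma kth_dist_nonneg:
  assumes "0 \<le> r\<^sub>0" "k \<le> card (S \<inter> cball 0 r\<^sub>0)"
  shows "0 \<le> kth_dist S k"
  unfolding kth_dist_def using assms by (intro cInf_greatest) auto

lemma kth_dist_attained:
  fixes S :: "(real \<times> real) set"
  assumes locally_finite: "\<And>A. bounded A \<Longrightarrow> finite (S \<inter> A)"
    and "0 \<le> r\<^sub>0" "k \<le> card (S \<inter> cball 0 r\<^sub>0)"
  shows "k \<le> card (S \<inter> cball 0 (kth_dist S k))"
proof (rule ccontr)
  define T where "T = {r. 0 \<le> r \<and> k \<le> card (S \<inter> cball 0 r)}"
  define s where "s = kth_dist S k"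
  have s_Inf: "s = Inf T" by (simp add: s_def kth_dist_def T_def)
  have T_ne: "T \<noteq> {}" and T_bdd: "bdd_below T"
    using assms(2,3) by (auto simp: T_def bdd_below_def)
  assume few: "\<not> k \<le> card (S \<inter> cball 0 s)"
  \<comment> \<open>Only finitely many points lie in \<open>cball 0 (s + 1)\<close>, so the count is constant on some \<open>[s, m)\<close>.\<close>
  define D where "D = norm ` {x \<in> S \<inter> cball 0 (s + 1). s < norm x}"
  have "finite (S \<inter> cball 0 (s + 1))" using locally_finite by simp
  then have D_fin: "finite D" unfolding D_def by (rule finite_imageI[OF finite_subset, rotated]) auto
  define m where "m = (if D = {} then s + 1 else Min D)"
  have "s < m" using D_fin by (auto simp: m_def D_def)
  have "d \<le> s + 1" if "d \<in> D" for d using that by (auto simp: D_def)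
  then have m_le: "m \<le> s + 1" using Min_in[OF D_fin] by (auto simp: m_def)
  have const: "S \<inter> cball 0 r = S \<inter> cball 0 s" if "s \<le> r" "r < m" for r
  proof (intro equalityI subsetI)
    fix x assume x: "x \<in> S \<inter> cball 0 r"
    show "x \<in> S \<inter> cball 0 s"
    proof (rule ccontr)
      assume "x \<notin> S \<inter> cball 0 s"
      with x that m_le have "norm x \<in> D" by (auto simp: D_def)
      with D_fin have "m \<le> norm x" by (auto simp: m_def)
      with x that show False by simp
    qed
  qed (use that in auto)
  obtain t where "t \<in> T" "t < m"
    using cInf_less_iff[OF T_ne T_bdd] \<open>s < m\<close> s_Inf by auto
  moreover have "s \<le> t" using \<open>t \<in> T\<close> T_bdd s_Inf by (simp add: cInf_lower)
  ultimately show False using const[of t] few by (auto simp: T_def)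
qed

lemma kth_dist_le_iff:
  fixes S :: "(real \<times> real) set"
  assumes locally_finite: "\<And>A. bounded A \<Longrightarrow> finite (S \<inter> A)"
    and "0 \<le> r\<^sub>0" "k \<le> card (S \<inter> cball 0 r\<^sub>0)" and "0 \<le> r"
  shows "kth_dist S k \<le> r \<longleftrightarrow> k \<le> card (S \<inter> cball 0 r)"
proof
  assume "kth_dist S k \<le> r"
  then have "card (S \<inter> cball 0 (kth_dist S k)) \<le> card (S \<inter> cball 0 r)"
    by (intro card_mono locally_finite) auto
  then show "k \<le> card (S \<inter> cball 0 r)"
    using kth_dist_attained[OF assms(1-3)] by linarith
next
  assume "k \<le> card (S \<inter> cball 0 r)"
  then show "kth_dist S k \<le> r"
    unfolding kth_dist_def using \<open>0 \<le> r\<close> by (intro cInf_lower) (auto simp: bdd_below_def)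
qed

lemma kth_dist_too_few_points:
  assumes "\<And>r. 0 \<le> r \<Longrightarrow> card (S \<inter> cball 0 r) < k"
  shows "kth_dist S k = Inf {}"
  unfolding kth_dist_def using assms by (metis (mono_tags, lifting) Collect_empty_eq not_le)

lemma measure_cball_pair: "0 \<le> r \<Longrightarrow> measure lborel (cball (0::real \<times> real) r) = pi * r^2"
  by (simp add: content_cball unit_ball_vol_2 power2_eq_square)

lemma measure_cball_pair_diff:
  assumes "0 \<le> r\<^sub>1" "r\<^sub>1 \<le> r\<^sub>2"
  shows "measure lborel (cball (0::real \<times> real) r\<^sub>2 - cball 0 r\<^sub>1) = pi * r\<^sub>2^2 - pi * r\<^sub>1^2"
  using assms by (subst measure_Diff) (auto simp: emeasure_cball measure_cball_pair)

section \<open>Measures on the plane\<close>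

text \<open>The measurability prover reasons about \<open>borel \<Otimes>\<^sub>M borel\<close>, not about \<open>borel\<close> on
  \<open>real \<times> real\<close>; the two agree by \<open>borel_prod\<close>.\<close>
lemma Collect_pair_borel:
  "Measurable.pred (borel \<Otimes>\<^sub>M borel) P \<Longrightarrow> {p::real \<times> real. P p} \<in> sets borel"
  unfolding Measurable.pred_def borel_prod by simp

lemma Collect_pair_lborel:
  "Measurable.pred (lborel \<Otimes>\<^sub>M lborel) P \<Longrightarrow> {p::real \<times> real. P p} \<in> sets borel"
  by (rule Collect_pair_borel) (simp add: measurable_cong_sets[OF sets_pair_measure_cong])

lemma emeasure_density_pair_lborel:
  fixes S :: "(real \<times> real) set" and f :: "real \<times> real \<Rightarrow> ennreal"
  assumes "Measurable.pred (lborel \<Otimes>\<^sub>M lborel) (\<lambda>p. p \<in> S)" "f \<in> borel_measurable (lborel \<Otimes>\<^sub>M lborel)"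
  shows "emeasure (density lborel f) S = (\<integral>\<^sup>+v. \<integral>\<^sup>+u. f (u, v) * indicator S (u, v) \<partial>lborel \<partial>lborel)"
proof -
  have "S \<in> sets borel" using Collect_pair_lborel[OF assms(1)] by simp
  then have "emeasure (density lborel f) S = (\<integral>\<^sup>+p. f p * indicator S p \<partial>(lborel \<Otimes>\<^sub>M lborel))"
    using assms(2) by (subst emeasure_density) (simp_all add: lborel_prod)
  also have "\<dots> = (\<integral>\<^sup>+v. \<integral>\<^sup>+u. f (u, v) * indicator S (u, v) \<partial>lborel \<partial>lborel)"
    using assms by (intro lborel_pair.nn_integral_snd[symmetric]) (simp add: measurable_split_conv)
  finally show ?thesis .
qed

lemma Int_stable_atMost_pair: "Int_stable (range atMost :: (real \<times> real) set set)"
proof (rule Int_stableI)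
  fix A B :: "(real \<times> real) set" assume "A \<in> range atMost" "B \<in> range atMost"
  then obtain x y where "A = {..x}" "B = {..y}" by auto
  moreover have "{..x} \<inter> {..y} = {..(min (fst x) (fst y), min (snd x) (snd y))}"
    by (auto simp: less_eq_prod_def)
  ultimately show "A \<inter> B \<in> range atMost" by auto
qed

lemma UN_atMost_pair_nat: "(\<Union>i::nat. {..(real i, real i)}) = (UNIV :: (real \<times> real) set)"
proof (intro set_eqI iffI)
  fix p :: "real \<times> real"
  obtain n :: nat where "max (fst p) (snd p) \<le> real n" using real_arch_simple by blast
  then show "p \<in> (\<Union>i. {..(real i, real i)})" by (auto simp: less_eq_prod_def)
qed auto

text \<open>Quadrants \<open>(a, \<infinity>) \<times> (-\<infinity>, b]\<close> and half-planes \<open>\<real> \<times> (-\<infinity>, b]\<close> determine a finite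
  measure on the plane: their differences are the lower-left quadrants generating the Borel sets.\<close>
lemma measure_eqI_quadrants:
  fixes N N' :: "(real \<times> real) measure"
  assumes sets: "sets N = sets borel" "sets N' = sets borel"
    and finite: "\<And>b. emeasure N {p. snd p \<le> b} \<noteq> \<infinity>"
    and below: "\<And>b. emeasure N {p. snd p \<le> b} = emeasure N' {p. snd p \<le> b}"
    and quadrant: "\<And>a b. emeasure N {p. a < fst p \<and> snd p \<le> b} = emeasure N' {p. a < fst p \<and> snd p \<le> b}"
  shows "N = N'"
proof (rule measure_eqI_generator_eq[where E = "range atMost" and \<Omega> = UNIV and A = "\<lambda>i. {..(real i, real i)}"])
  have sets_below: "{p::real \<times> real. snd p \<le> b} \<in> sets borel" for b
    by (rule Collect_pair_borel) measurable
  have sets_quadrant: "{p::real \<times> real. a < fst p \<and> snd p \<le> b} \<in> sets borel" for a b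
    by (rule Collect_pair_borel) measurable
  show "sets N = sigma_sets UNIV (range atMost)" "sets N' = sigma_sets UNIV (range atMost)"
    using sets by (simp_all add: borel_eq_atMost)
  show "emeasure N {..(real i, real i)} \<noteq> \<infinity>" for i
  proof -
    have "emeasure N {..(real i, real i)} \<le> emeasure N {p. snd p \<le> real i}"
      using sets sets_below by (intro emeasure_mono) (auto simp: less_eq_prod_def)
    then show ?thesis using finite[of "real i"] by (auto simp: top_unique)
  qed
  fix Y :: "(real \<times> real) set" assume "Y \<in> range atMost"
  then obtain a b where "Y = {..(a, b)}" by (metis prod.collapse rangeE)
  then have Y: "Y = {p. snd p \<le> b} - {p. a < fst p \<and> snd p \<le> b}"
    by (auto simp: less_eq_prod_def)
  have "emeasure N {p. a < fst p \<and> snd p \<le> b} \<le> emeasure N {p. snd p \<le> b}"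
    using sets sets_below by (intro emeasure_mono) auto
  then have "emeasure N {p. a < fst p \<and> snd p \<le> b} \<noteq> \<infinity>"
    using finite[of b] by (auto simp: top_unique)
  then have "emeasure N' {p. a < fst p \<and> snd p \<le> b} \<noteq> \<infinity>" using quadrant by simp
  with \<open>emeasure N {p. a < fst p \<and> snd p \<le> b} \<noteq> \<infinity>\<close> show "emeasure N Y = emeasure N' Y"
    unfolding Y using sets sets_below sets_quadrant below quadrant
    by (subst (1 2) emeasure_Diff) auto
qed (auto simp: Int_stable_atMost_pair UN_atMost_pair_nat)

lemma nn_integral_power_diff:
  fixes c v e :: real
  assumes "c \<le> v" "0 \<le> e" "{c<..<v} \<subseteq> I" "I \<subseteq> {c..v}"
  shows "(\<integral>\<^sup>+u. ennreal ((v - u)^m / fact m * e) * indicator I u \<partial>lborel)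
           = ennreal ((v - c)^Suc m / fact (Suc m) * e)"
proof -
  define F where "F u = - ((v - u)^Suc m / fact (Suc m) * e)" for u
  have "AE u in lborel. u \<noteq> c" "AE u in lborel. u \<noteq> v" by (rule AE_lborel_singleton)+
  then have "AE u in lborel. ennreal ((v - u)^m / fact m * e) * indicator I u
                            = ennreal ((v - u)^m / fact m * e) * indicator {c..v} u"
    by eventually_elim (use assms(3,4) in \<open>auto simp: subset_eq split: split_indicator\<close>)
  then have "(\<integral>\<^sup>+u. ennreal ((v - u)^m / fact m * e) * indicator I u \<partial>lborel)
      = (\<integral>\<^sup>+u. ennreal ((v - u)^m / fact m * e) * indicator {c..v} u \<partial>lborel)"
    by (rule nn_integral_cong_AE)
  also have "\<dots> = ennreal (F v - F c)"
  proof (rule nn_integral_FTC_Icc)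
    fix x assume "x \<in> {c..v}"
    then show "0 \<le> (v - x)^m / fact m * e" using assms by simp
    have "(F has_real_derivative - (real (Suc m) * (v - x)^m * (- 1)) / fact (Suc m) * e) (at x)"
      unfolding F_def by (auto intro!: derivative_eq_intros simp del: power_Suc)
    then show "(F has_real_derivative (v - x)^m / fact m * e) (at x)"
      by (simp add: field_simps del: of_nat_Suc)
  qed (use assms in auto)
  finally show ?thesis by (simp add: F_def)
qed

section \<open>Joint law of the first and L-th masses\<close>

text \<open>\<open>order_cdf L a b = P(a < U\<^sub>1, U\<^sub>L \<le> b)\<close>; the \<open>max\<close> reflects \<open>U\<^sub>1 \<ge> 0\<close>.\<close>
definition order_cdf :: "nat \<Rightarrow> real \<Rightarrow> real \<Rightarrow> real" where
  "order_cdf L a b = exp (- max a 0) * erlang_CDF (L - 1) 1 (b - max a 0)"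

text \<open>The joint density of \<open>(U\<^sub>1, U\<^sub>L)\<close>: \<open>U\<^sub>1\<close> is exponential and \<open>U\<^sub>L - U\<^sub>1\<close> an independent
  Erlang variable of shape \<open>L - 1\<close>.\<close>
definition order_density :: "nat \<Rightarrow> real \<times> real \<Rightarrow> real" where
  "order_density L p =
     (if 0 < fst p \<and> fst p < snd p then (snd p - fst p)^(L - 2) / fact (L - 2) * exp (- snd p) else 0)"

lemma order_density_measurable_pair[measurable]: "order_density L \<in> borel_measurable (lborel \<Otimes>\<^sub>M lborel)"
  unfolding order_density_def[abs_def] by measurable

lemma order_density_measurable[measurable]: "order_density L \<in> borel_measurable borel"
  using order_density_measurable_pair[of L] by (simp add: lborel_prod)

lemma nn_integral_order_density_quadrant_slice:
  assumes "2 \<le> L"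
  shows "(\<integral>\<^sup>+u. ennreal (order_density L (u, v)) * indicator {p. a < fst p \<and> snd p \<le> b} (u, v) \<partial>lborel)
           = ennreal (indicator {max a 0<..b} v * ((v - max a 0)^(L - 1) / fact (L - 1) * exp (- v)))"
proof (cases "max a 0 < v \<and> v \<le> b")
  case True
  have "(\<integral>\<^sup>+u. ennreal (order_density L (u, v)) * indicator {p. a < fst p \<and> snd p \<le> b} (u, v) \<partial>lborel)
      = (\<integral>\<^sup>+u. ennreal ((v - u)^(L - 2) / fact (L - 2) * exp (- v)) * indicator {max a 0<..<v} u \<partial>lborel)"
    using True by (intro nn_integral_cong) (auto simp: order_density_def split: split_indicator)
  also have "\<dots> = ennreal ((v - max a 0)^Suc (L - 2) / fact (Suc (L - 2)) * exp (- v))"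
    using True by (intro nn_integral_power_diff) auto
  also have "Suc (L - 2) = L - 1" using assms by simp
  finally show ?thesis using True by simp
next
  case False
  then have zero: "ennreal (order_density L (u, v)) * indicator {p. a < fst p \<and> snd p \<le> b} (u, v) = 0" for u
    by (auto simp: order_density_def split: split_indicator)
  show ?thesis using False by (simp only: zero) simp
qed

lemma emeasure_order_density_quadrant:
  assumes "2 \<le> L"
  shows "emeasure (density lborel (\<lambda>p. ennreal (order_density L p))) {p. a < fst p \<and> snd p \<le> b}
           = ennreal (order_cdf L a b)"
proof -
  define a' where "a' = max a 0"
  have "emeasure (density lborel (\<lambda>p. ennreal (order_density L p))) {p. a < fst p \<and> snd p \<le> b}
      = (\<integral>\<^sup>+v. ennreal (indicator {a'<..b} v * ((v - a')^(L - 1) / fact (L - 1) * exp (- v))) \<partial>lborel)"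
    by (subst emeasure_density_pair_lborel)
       (simp_all add: nn_integral_order_density_quadrant_slice[OF assms] a'_def)
  also have "\<dots> = (\<integral>\<^sup>+x. ennreal (indicator {a'<..b} (a' + x) * (x^(L - 1) / fact (L - 1) * exp (- (a' + x)))) \<partial>lborel)"
    using nn_integral_real_affine[of "\<lambda>v. ennreal (indicator {a'<..b} v * ((v - a')^(L - 1) / fact (L - 1) * exp (- v)))" 1 a']
    by simp
  also have "\<dots> = (\<integral>\<^sup>+x. ennreal (exp (- a')) * (ennreal (erlang_density (L - 1) 1 x) * indicator {..b - a'} x) \<partial>lborel)"
  proof (rule nn_integral_cong)
    fix x :: real
    show "ennreal (indicator {a'<..b} (a' + x) * (x^(L - 1) / fact (L - 1) * exp (- (a' + x))))
        = ennreal (exp (- a')) * (ennreal (erlang_density (L - 1) 1 x) * indicator {..b - a'} x)"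
      using assms
      by (cases "0 < x")
         (auto simp: erlang_density_def indicator_def exp_add ennreal_mult'[symmetric] mult_ac exp_diff
           exp_minus field_simps)
  qed
  also have "\<dots> = ennreal (exp (- a')) * ennreal (erlang_CDF (L - 1) 1 (b - a'))"
    by (simp add: nn_integral_cmult nn_integral_erlang_density)
  also have "\<dots> = ennreal (order_cdf L a b)"
    by (simp add: order_cdf_def a'_def ennreal_mult'[symmetric])
  finally show ?thesis .
qed

lemma emeasure_order_density_below:
  assumes "2 \<le> L"
  shows "emeasure (density lborel (\<lambda>p. ennreal (order_density L p))) {p. snd p \<le> b}
           = ennreal (order_cdf L (- 1) b)"
proof -
  have "emeasure (density lborel (\<lambda>p. ennreal (order_density L p))) {p. snd p \<le> b}
      = emeasure (density lborel (\<lambda>p. ennreal (order_density L p))) {p. - 1 < fst p \<and> snd p \<le> b}"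
    by (simp add: emeasure_density_pair_lborel)
       (intro nn_integral_cong; auto simp: order_density_def split: split_indicator)
  then show ?thesis using emeasure_order_density_quadrant[OF assms] by simp
qed

section \<open>The approximate SIR and the coverage region\<close>

lemma inverse_diff_quotient:
  fixes a b :: real
  assumes "a \<noteq> 0" "b \<noteq> 0" "a \<noteq> b"
  shows "(1 / b - 1 / a) / (b - a) = - 1 / (a * b)"
  using assms by (simp add: field_simps)

lemma sir_approx_alpha4:
  fixes x y lam :: real
  assumes "0 < x" "x < y" "2 \<le> L"
  shows "sir_approx 4 1 lam (L - 1) x y = 1 / ((y^2 / x^2)^2 + (real L - 2) * (y^2 / x^2) + lam * pi * y^2)"
proof -
  have pw: "z powr (-4) = 1 / z^4" "z powr (-2) = 1 / z^2" if "0 < z" for z :: real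
    using that by (simp_all add: powr_minus_divide powr_numeral)
  have "0 < y" "x^2 < y^2" using assms by (auto intro: power_strict_mono)
  then have slope: "(1 / y^2 - 1 / x^2) / (y^2 - x^2) = - 1 / (x^2 * y^2)"
    using assms by (intro inverse_diff_quotient) auto
  have "1 \<le> L - 1" using assms by simp
  then have "sir_approx 4 1 lam (L - 1) x y = (1 / y^4) / (1 / x^4 + (real L - 2) / (x^2 * y^2) + lam * pi / y^2)"
    using assms \<open>0 < y\<close> unfolding sir_approx_def by (simp add: pw slope of_nat_diff) (simp add: field_simps)
  also have "\<dots> = 1 / ((y^2 / x^2)^2 + (real L - 2) * (y^2 / x^2) + lam * pi * y^2)"
    using \<open>0 < y\<close> assms by (simp add: field_simps power2_eq_square power4_eq_xxxx)
  finally show ?thesis .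
qed

lemma le_sqrt_shift_iff:
  fixes t b e :: real
  assumes "0 < t" "0 \<le> b"
  shows "t \<le> sqrt (e + b^2 / 4) - b / 2 \<longleftrightarrow> t^2 + b * t \<le> e"
proof -
  have "t \<le> sqrt (e + b^2 / 4) - b / 2 \<longleftrightarrow> sqrt ((t + b / 2)^2) \<le> sqrt (e + b^2 / 4)"
    using assms by (simp add: le_diff_eq)
  also have "\<dots> \<longleftrightarrow> t^2 + b * t \<le> e"
    unfolding real_sqrt_le_iff by (simp add: power2_eq_square algebra_simps)
  finally show ?thesis .
qed

lemma less_sqrt_shift_iff:
  fixes t b e :: real
  assumes "0 < t" "0 \<le> b"
  shows "t < sqrt (e + b^2 / 4) - b / 2 \<longleftrightarrow> t^2 + b * t < e"
proof -
  have "t < sqrt (e + b^2 / 4) - b / 2 \<longleftrightarrow> sqrt ((t + b / 2)^2) < sqrt (e + b^2 / 4)"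
    using assms by (simp add: less_diff_eq)
  also have "\<dots> \<longleftrightarrow> t^2 + b * t < e"
    unfolding real_sqrt_less_iff by (simp add: power2_eq_square algebra_simps)
  finally show ?thesis .
qed

text \<open>The positive root in \<open>t\<close> of \<open>t\<^sup>2 + (L - 2) t + v = K\<close>.\<close>
definition coverage_threshold :: "nat \<Rightarrow> real \<Rightarrow> real \<Rightarrow> real" where
  "coverage_threshold L K v = sqrt (K - v + (real L - 2)^2 / 4) - (real L - 2) / 2"

definition coverage_region :: "nat \<Rightarrow> real \<Rightarrow> (real \<times> real) set" where
  "coverage_region L K = {(u, v). 0 < u \<and> u < v \<and> (v / u)^2 + (real L - 2) * (v / u) + v \<le> K}"

definition coverage_integrand :: "nat \<Rightarrow> real \<Rightarrow> real \<Rightarrow> real" where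
  "coverage_integrand L K v =
     exp (- v) * v^(L - 1) * (1 - 1 / coverage_threshold L K v)^(L - 1) / fact (L - 1)"

lemma le_coverage_threshold_iff:
  assumes "2 \<le> L" "0 < t"
  shows "t \<le> coverage_threshold L K v \<longleftrightarrow> t^2 + (real L - 2) * t + v \<le> K"
  using le_sqrt_shift_iff[OF assms(2), of "real L - 2" "K - v"] assms(1)
  unfolding coverage_threshold_def by auto

lemma less_coverage_threshold_iff:
  assumes "2 \<le> L" "0 < t"
  shows "t < coverage_threshold L K v \<longleftrightarrow> t^2 + (real L - 2) * t + v < K"
  using less_sqrt_shift_iff[OF assms(2), of "real L - 2" "K - v"] assms(1)
  unfolding coverage_threshold_def by auto

lemma one_le_coverage_threshold_iff:
  "2 \<le> L \<Longrightarrow> 1 \<le> coverage_threshold L K v \<longleftrightarrow> v \<le> K - real (L - 1)"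
  by (subst le_coverage_threshold_iff) (auto simp: of_nat_diff)

lemma one_less_coverage_threshold_iff:
  "2 \<le> L \<Longrightarrow> 1 < coverage_threshold L K v \<longleftrightarrow> v < K - real (L - 1)"
  by (subst less_coverage_threshold_iff) (auto simp: of_nat_diff)

lemma coverage_region_iff:
  assumes "2 \<le> L" "0 < u" "0 < v"
  shows "(u, v) \<in> coverage_region L K
           \<longleftrightarrow> v < K - real (L - 1) \<and> v / coverage_threshold L K v \<le> u \<and> u < v"
proof
  assume "(u, v) \<in> coverage_region L K"
  then have "u < v" and le: "v / u \<le> coverage_threshold L K v"
    using le_coverage_threshold_iff[OF assms(1), of "v / u"] assms(2,3) by (auto simp: coverage_region_def)
  moreover have "1 < v / u" using \<open>u < v\<close> assms(2) by simp
  ultimately have "1 < coverage_threshold L K v" by linarith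
  moreover have "v / coverage_threshold L K v \<le> u"
    using le assms(2) \<open>1 < coverage_threshold L K v\<close> by (simp add: pos_divide_le_eq mult.commute)
  ultimately show "v < K - real (L - 1) \<and> v / coverage_threshold L K v \<le> u \<and> u < v"
    using one_less_coverage_threshold_iff[OF assms(1)] \<open>u < v\<close> by simp
next
  assume *: "v < K - real (L - 1) \<and> v / coverage_threshold L K v \<le> u \<and> u < v"
  then have "1 < coverage_threshold L K v" using one_less_coverage_threshold_iff[OF assms(1)] by simp
  then have "0 < coverage_threshold L K v" by simp
  then have "v \<le> u * coverage_threshold L K v" using * pos_divide_le_eq by blast
  then have "v / u \<le> coverage_threshold L K v" using assms(2) by (simp add: pos_divide_le_eq mult.commute)
  then show "(u, v) \<in> coverage_region L K"
    using * le_coverage_threshold_iff[OF assms(1), of "v / u"] assms(2,3) by (simp add: coverage_region_def)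
qed

lemma coverage_region_measurable[measurable]:
  "Measurable.pred (lborel \<Otimes>\<^sub>M lborel) (\<lambda>p. p \<in> coverage_region L K)"
  unfolding coverage_region_def by (simp add: case_prod_beta) measurable

lemma nn_integral_coverage_region_slice:
  assumes "2 \<le> L"
  shows "(\<integral>\<^sup>+u. ennreal (order_density L (u, v)) * indicator (coverage_region L K) (u, v) \<partial>lborel)
           = ennreal (indicator {0<..<K - real (L - 1)} v * coverage_integrand L K v)"
proof (cases "0 < v \<and> v < K - real (L - 1)")
  case True
  then have "1 < coverage_threshold L K v" using one_less_coverage_threshold_iff[OF assms] by simp
  define c where "c = v / coverage_threshold L K v"
  have c: "0 < c" "c < v" using True \<open>1 < coverage_threshold L K v\<close> by (auto simp: c_def divide_less_eq)
  have "ennreal (order_density L (u, v)) * indicator (coverage_region L K) (u, v)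
      = ennreal ((v - u)^(L - 2) / fact (L - 2) * exp (- v)) * indicator {c..<v} u" for u
    using coverage_region_iff[OF assms, of u v K] True c
    by (cases "0 < u") (auto simp: order_density_def c_def coverage_region_def split: split_indicator)
  then have "(\<integral>\<^sup>+u. ennreal (order_density L (u, v)) * indicator (coverage_region L K) (u, v) \<partial>lborel)
      = (\<integral>\<^sup>+u. ennreal ((v - u)^(L - 2) / fact (L - 2) * exp (- v)) * indicator {c..<v} u \<partial>lborel)"
    by simp
  also have "\<dots> = ennreal ((v - c)^Suc (L - 2) / fact (Suc (L - 2)) * exp (- v))"
    using c by (intro nn_integral_power_diff) auto
  also have "(v - c)^Suc (L - 2) / fact (Suc (L - 2)) * exp (- v) = coverage_integrand L K v"
  proof -
    have "Suc (L - 2) = L - 1" using assms by simp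
    moreover have "v - c = v * (1 - 1 / coverage_threshold L K v)" by (simp add: c_def algebra_simps)
    ultimately show ?thesis by (simp add: coverage_integrand_def power_mult_distrib)
  qed
  finally show ?thesis using True by simp
next
  case False
  have "(u, v) \<notin> coverage_region L K" for u
    using coverage_region_iff[OF assms, of u v K] False by (cases "0 < u \<and> 0 < v") (auto simp: coverage_region_def)
  then show ?thesis using False by simp
qed

lemma emeasure_coverage_region:
  assumes "2 \<le> L"
  shows "emeasure (density lborel (\<lambda>p. ennreal (order_density L p))) (coverage_region L K)
           = (\<integral>\<^sup>+v. ennreal (indicator {0<..<K - real (L - 1)} v * coverage_integrand L K v) \<partial>lborel)"
  by (subst emeasure_density_pair_lborel) (simp_all add: nn_integral_coverage_region_slice[OF assms])

section \<open>The Poisson process\<close>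

locale planar_ppp =
  fixes M :: "'w measure" and lam :: real and Phi :: "'w \<Rightarrow> (real \<times> real) set"
  assumes ppp: "poisson_pp M lam Phi" and lam_pos: "0 < lam"
begin

sublocale prob_space M
  using ppp by (simp add: poisson_pp_def)

lemma locally_finite: "\<omega> \<in> space M \<Longrightarrow> bounded A \<Longrightarrow> finite (Phi \<omega> \<inter> A)"
  using ppp by (simp add: poisson_pp_def)

lemma sets_count_event:
  assumes "A \<in> sets borel" "bounded A"
  shows "{\<omega> \<in> space M. P (card (Phi \<omega> \<inter> A))} \<in> sets M"
proof -
  have "(\<lambda>\<omega>. card (Phi \<omega> \<inter> A)) \<in> measurable M (count_space UNIV)"
    using ppp assms by (simp add: poisson_pp_def)
  from measurable_sets[OF this, of "{n. P n}"] show ?thesis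
    by (simp add: vimage_def Int_def conj_commute)
qed

lemma prob_count_eq:
  assumes "A \<in> sets borel" "bounded A"
  shows "prob {\<omega> \<in> space M. card (Phi \<omega> \<inter> A) = k}
           = (lam * measure lborel A) ^ k / fact k * exp (- (lam * measure lborel A))"
  using ppp assms by (simp add: poisson_pp_def)

lemma prob_count_less:
  assumes "A \<in> sets borel" "bounded A"
  shows "prob {\<omega> \<in> space M. card (Phi \<omega> \<inter> A) < m}
           = (\<Sum>k<m. (lam * measure lborel A) ^ k / fact k * exp (- (lam * measure lborel A)))"
proof (induction m)
  case (Suc m)
  have "{\<omega> \<in> space M. card (Phi \<omega> \<inter> A) < Suc m}
      = {\<omega> \<in> space M. card (Phi \<omega> \<inter> A) < m} \<union> {\<omega> \<in> space M. card (Phi \<omega> \<inter> A) = m}"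
    by auto
  moreover have "prob ({\<omega> \<in> space M. card (Phi \<omega> \<inter> A) < m} \<union> {\<omega> \<in> space M. card (Phi \<omega> \<inter> A) = m})
      = prob {\<omega> \<in> space M. card (Phi \<omega> \<inter> A) < m} + prob {\<omega> \<in> space M. card (Phi \<omega> \<inter> A) = m}"
    by (rule finite_measure_Union) (auto intro: sets_count_event[OF assms])
  ultimately show ?case using Suc prob_count_eq[OF assms] by simp
qed simp

text \<open>Poisson--Erlang duality: at least \<open>m\<close> points fall in \<open>A\<close> exactly when the \<open>m\<close>-th
  arrival of a unit-rate Poisson process comes before time \<open>\<lambda>|A|\<close>.\<close>
lemma prob_count_ge:
  assumes "A \<in> sets borel" "bounded A" "1 \<le> m"
  shows "prob {\<omega> \<in> space M. m \<le> card (Phi \<omega> \<inter> A)} = erlang_CDF (m - 1) 1 (lam * measure lborel A)"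
proof -
  have "{\<omega> \<in> space M. m \<le> card (Phi \<omega> \<inter> A)} = space M - {\<omega> \<in> space M. card (Phi \<omega> \<inter> A) < m}"
    by auto
  moreover have "{..m - 1} = {..<m}" using assms(3) by auto
  moreover have "0 \<le> lam * measure lborel A" using lam_pos by simp
  ultimately show ?thesis
    using prob_count_less[OF assms(1,2)] sets_count_event[OF assms(1,2)]
    by (simp add: prob_compl erlang_CDF_def mult_ac)
qed

lemma counts_indep_vars:
  fixes I :: "nat set"
  assumes "finite I" "disjoint_family_on C I" "\<forall>i\<in>I. C i \<in> sets borel \<and> bounded (C i)"
  shows "indep_vars (\<lambda>_. count_space UNIV) (\<lambda>i \<omega>. card (Phi \<omega> \<inter> C i)) I"
proof -
  have "\<forall>(I::nat set) C. finite I \<longrightarrow> disjoint_family_on C I \<longrightarrow>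
          (\<forall>i\<in>I. C i \<in> sets lborel \<and> bounded (C i)) \<longrightarrow>
          indep_vars (\<lambda>_. count_space UNIV) (\<lambda>i \<omega>. card (Phi \<omega> \<inter> C i)) I"
    using ppp unfolding poisson_pp_def by (elim conjE) assumption
  with assms show ?thesis by simp
qed

lemma prob_counts_indep:
  assumes A: "A \<in> sets borel" "bounded A" and B: "B \<in> sets borel" "bounded B"
    and disj: "A \<inter> B = {}"
  shows "prob ({\<omega> \<in> space M. card (Phi \<omega> \<inter> A) \<in> S} \<inter> {\<omega> \<in> space M. card (Phi \<omega> \<inter> B) \<in> T})
           = prob {\<omega> \<in> space M. card (Phi \<omega> \<inter> A) \<in> S} * prob {\<omega> \<in> space M. card (Phi \<omega> \<inter> B) \<in> T}"
proof -
  define C :: "nat \<Rightarrow> (real \<times> real) set" where "C i = (if i = 0 then A else B)" for i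
  define U :: "nat \<Rightarrow> nat set" where "U i = (if i = 0 then S else T)" for i
  define E where "E i = (\<lambda>\<omega>. card (Phi \<omega> \<inter> C i)) -` U i \<inter> space M" for i
  have "indep_vars (\<lambda>_. count_space UNIV) (\<lambda>i \<omega>. card (Phi \<omega> \<inter> C i)) {0, 1}"
    using A B disj by (intro counts_indep_vars) (auto simp: C_def disjoint_family_on_def)
  then have "prob (\<Inter>i\<in>{0, 1}. E i) = (\<Prod>i\<in>{0, 1}. prob (E i))"
    unfolding E_def by (rule indep_varsD) auto
  moreover have "E 0 = {\<omega> \<in> space M. card (Phi \<omega> \<inter> A) \<in> S}" "E 1 = {\<omega> \<in> space M. card (Phi \<omega> \<inter> B) \<in> T}"
    by (auto simp: E_def C_def U_def)
  ultimately show ?thesis by simp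
qed

definition ball_count :: "real \<Rightarrow> 'w \<Rightarrow> nat" where
  "ball_count r \<omega> = card (Phi \<omega> \<inter> cball 0 r)"

definition kth_radius :: "nat \<Rightarrow> 'w \<Rightarrow> real" where
  "kth_radius k \<omega> = kth_dist (Phi \<omega>) k"

text \<open>\<open>kth_mass k\<close> is \<open>U\<^sub>k = \<lambda>\<pi>R\<^sub>k\<^sup>2\<close>, the mean number of points in the disc of radius \<open>R\<^sub>k\<close>.\<close>
definition kth_mass :: "nat \<Rightarrow> 'w \<Rightarrow> real" where
  "kth_mass k \<omega> = lam * pi * (kth_radius k \<omega>)^2"

definition radius_of_mass :: "real \<Rightarrow> real" where
  "radius_of_mass c = sqrt (c / (lam * pi))"

text \<open>On \<open>few_points k\<close>, which is a null set, there is no \<open>k\<close>-th point and \<open>kth_dist\<close> takes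
  the unspecified value \<open>Inf {}\<close>.\<close>
definition few_points :: "nat \<Rightarrow> 'w set" where
  "few_points k = {\<omega> \<in> space M. \<forall>n::nat. ball_count (real n) \<omega> < k}"

lemma sets_ball_count_event: "{\<omega> \<in> space M. P (ball_count r \<omega>)} \<in> sets M"
  unfolding ball_count_def by (rule sets_count_event) auto

lemma ball_count_mono: "\<omega> \<in> space M \<Longrightarrow> r \<le> r' \<Longrightarrow> ball_count r \<omega> \<le> ball_count r' \<omega>"
  unfolding ball_count_def by (intro card_mono locally_finite) auto

lemma ball_count_few_points:
  assumes "\<omega> \<in> few_points k"
  shows "ball_count r \<omega> < k"
proof -
  have "ball_count r \<omega> \<le> ball_count (real (nat \<lceil>r\<rceil>)) \<omega>"
    using assms by (intro ball_count_mono real_nat_ceiling_ge) (simp add: few_points_def)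
  also have "\<dots> < k" using assms by (simp add: few_points_def)
  finally show ?thesis .
qed

lemma few_points_subset_space: "few_points k \<subseteq> space M"
  by (auto simp: few_points_def)

lemma few_points_mono: "k \<le> m \<Longrightarrow> few_points k \<subseteq> few_points m"
  unfolding few_points_def by (auto intro: less_le_trans)

lemma sets_few_points: "few_points k \<in> sets M"
proof -
  have "few_points k = (\<Inter>n. {\<omega> \<in> space M. ball_count (real n) \<omega> < k})"
    by (auto simp: few_points_def)
  then show ?thesis using sets_ball_count_event by auto
qed

lemma few_points_null: "few_points k \<in> null_sets M"
proof -
  define \<mu> :: "nat \<Rightarrow> real" where "\<mu> n = lam * pi * (real n)^2" for n
  have bound: "prob (few_points k) \<le> (\<Sum>j<k. \<mu> n ^ j / fact j * exp (- \<mu> n))" for n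
  proof -
    have "prob (few_points k) \<le> prob {\<omega> \<in> space M. ball_count (real n) \<omega> < k}"
      using sets_ball_count_event by (intro finite_measure_mono) (auto simp: few_points_def)
    also have "\<dots> = (\<Sum>j<k. \<mu> n ^ j / fact j * exp (- \<mu> n))"
      unfolding ball_count_def by (subst prob_count_less) (auto simp: measure_cball_pair \<mu>_def mult.assoc)
    finally show ?thesis .
  qed
  have "filterlim \<mu> at_top sequentially"
    unfolding \<mu>_def using lam_pos
    by (intro filterlim_tendsto_pos_mult_at_top[OF tendsto_const] filterlim_pow_at_top
        filterlim_real_sequentially) auto
  then have "(\<lambda>n. \<mu> n ^ j / exp (\<mu> n)) \<longlonglongrightarrow> 0" for j
    by (rule filterlim_compose[OF tendsto_power_div_exp_0])
  moreover have "(\<lambda>n. \<mu> n ^ j / fact j * exp (- \<mu> n)) = (\<lambda>n. \<mu> n ^ j / exp (\<mu> n) * (1 / fact j))" for j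
    by (simp add: exp_minus field_simps)
  ultimately have "(\<lambda>n. \<mu> n ^ j / fact j * exp (- \<mu> n)) \<longlonglongrightarrow> 0" for j
    by (simp only: tendsto_mult_left_zero)
  then have "(\<lambda>n. \<Sum>j<k. \<mu> n ^ j / fact j * exp (- \<mu> n)) \<longlonglongrightarrow> (\<Sum>j<k. 0)"
    by (rule tendsto_sum)
  then have "prob (few_points k) \<le> 0"
    using bound by (intro LIMSEQ_le_const) auto
  then show ?thesis
    using sets_few_points by (auto simp: null_sets_def emeasure_eq_measure intro: antisym)
qed

lemma AE_not_few_points: "AE \<omega> in M. \<omega> \<notin> few_points k"
  using few_points_null AE_not_in by blast

lemma kth_radius_nonneg:
  assumes "\<omega> \<in> space M - few_points k"
  shows "0 \<le> kth_radius k \<omega>"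
proof -
  obtain n :: nat where "k \<le> ball_count (real n) \<omega>"
    using assms by (auto simp: few_points_def not_less)
  then show ?thesis
    unfolding kth_radius_def ball_count_def by (intro kth_dist_nonneg[of "real n"]) auto
qed

lemma kth_radius_le_iff:
  assumes "\<omega> \<in> space M - few_points k" "0 \<le> r"
  shows "kth_radius k \<omega> \<le> r \<longleftrightarrow> k \<le> ball_count r \<omega>"
proof -
  obtain n :: nat where "k \<le> ball_count (real n) \<omega>"
    using assms by (auto simp: few_points_def not_less)
  then show ?thesis
    unfolding kth_radius_def ball_count_def
    using assms locally_finite by (intro kth_dist_le_iff[of _ "real n"]) auto
qed

lemma kth_radius_few_points: "\<omega> \<in> few_points k \<Longrightarrow> kth_radius k \<omega> = Inf {}"
  unfolding kth_radius_def
  by (rule kth_dist_too_few_points) (use ball_count_few_points in \<open>simp add: ball_count_def\<close>)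

lemma kth_radius_measurable[measurable]: "kth_radius k \<in> borel_measurable M"
proof (rule borel_measurable_iff_le[THEN iffD2], intro allI)
  fix a :: real
  have le_iff: "kth_radius k \<omega> \<le> a \<longleftrightarrow>
      (0 \<le> a \<and> k \<le> ball_count a \<omega>) \<or> (\<omega> \<in> few_points k \<and> Inf {} \<le> a)"
    if "\<omega> \<in> space M" for \<omega>
  proof (cases "\<omega> \<in> few_points k")
    case True
    then show ?thesis using ball_count_few_points[OF True, of a] kth_radius_few_points[OF True] by auto
  next
    case False
    then show ?thesis
    proof (cases "0 \<le> a")
      case True
      then show ?thesis using kth_radius_le_iff[of \<omega> k a] that \<open>\<omega> \<notin> few_points k\<close> by auto
    next
      case False
      then show ?thesis using kth_radius_nonneg[of \<omega> k] that \<open>\<omega> \<notin> few_points k\<close> by auto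
    qed
  qed
  have "{\<omega> \<in> space M. kth_radius k \<omega> \<le> a}
      = {\<omega> \<in> space M. 0 \<le> a \<and> k \<le> ball_count a \<omega>} \<union> (if Inf {} \<le> a then few_points k else {})"
    using few_points_subset_space by (auto simp: le_iff kth_radius_few_points)
  also have "\<dots> \<in> sets M"
  proof (rule sets.Un)
    show "(if Inf {} \<le> a then few_points k else {}) \<in> sets M"
      using sets_few_points by simp
  qed (rule sets_ball_count_event)
  finally show "{\<omega> \<in> space M. kth_radius k \<omega> \<le> a} \<in> sets M" .
qed

lemma kth_mass_nonneg: "0 \<le> kth_mass k \<omega>"
  using lam_pos by (simp add: kth_mass_def)

lemma kth_mass_measurable[measurable]: "kth_mass k \<in> borel_measurable M"
  unfolding kth_mass_def[abs_def] by measurable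

lemma radius_of_mass_nonneg: "0 \<le> c \<Longrightarrow> 0 \<le> radius_of_mass c"
  using lam_pos by (simp add: radius_of_mass_def)

lemma radius_of_mass_mono: "c \<le> c' \<Longrightarrow> radius_of_mass c \<le> radius_of_mass c'"
  using lam_pos by (simp add: radius_of_mass_def divide_right_mono)

lemma mass_radius_of_mass: "0 \<le> c \<Longrightarrow> lam * pi * (radius_of_mass c)^2 = c"
  using lam_pos by (simp add: radius_of_mass_def)

lemma kth_mass_le_iff:
  assumes "\<omega> \<in> space M - few_points k" "0 \<le> c"
  shows "kth_mass k \<omega> \<le> c \<longleftrightarrow> k \<le> ball_count (radius_of_mass c) \<omega>"
proof -
  have "kth_mass k \<omega> \<le> c \<longleftrightarrow> (kth_radius k \<omega>)^2 \<le> (radius_of_mass c)^2"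
    using lam_pos assms(2) by (simp add: kth_mass_def radius_of_mass_def pos_le_divide_eq mult_ac)
  also have "\<dots> \<longleftrightarrow> kth_radius k \<omega> \<le> radius_of_mass c"
    using kth_radius_nonneg[OF assms(1)] radius_of_mass_nonneg[OF assms(2)] by (simp add: power_mono_iff)
  also have "\<dots> \<longleftrightarrow> k \<le> ball_count (radius_of_mass c) \<omega>"
    using assms radius_of_mass_nonneg by (intro kth_radius_le_iff) auto
  finally show ?thesis .
qed

lemma prob_last_mass_le:
  assumes "1 \<le> L" "0 \<le> b"
  shows "prob {\<omega> \<in> space M. kth_mass L \<omega> \<le> b} = erlang_CDF (L - 1) 1 b"
proof -
  define r where "r = radius_of_mass b"
  have "prob {\<omega> \<in> space M. kth_mass L \<omega> \<le> b} = prob {\<omega> \<in> space M. L \<le> card (Phi \<omega> \<inter> cball 0 r)}"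
  proof (rule measure_eq_AE)
    show "AE \<omega> in M. \<omega> \<in> {\<omega> \<in> space M. kth_mass L \<omega> \<le> b}
        \<longleftrightarrow> \<omega> \<in> {\<omega> \<in> space M. L \<le> card (Phi \<omega> \<inter> cball 0 r)}"
      using AE_not_few_points[of L]
      by eventually_elim (use kth_mass_le_iff assms(2) in \<open>auto simp: ball_count_def r_def\<close>)
    show "{\<omega> \<in> space M. kth_mass L \<omega> \<le> b} \<in> sets M" by measurable
    show "{\<omega> \<in> space M. L \<le> card (Phi \<omega> \<inter> cball 0 r)} \<in> sets M" by (rule sets_count_event) auto
  qed
  also have "\<dots> = erlang_CDF (L - 1) 1 b"
    using prob_count_ge[of "cball 0 r" L] mass_radius_of_mass[of b] radius_of_mass_nonneg[of b] assms
    by (simp add: measure_cball_pair r_def mult.assoc)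
  finally show ?thesis .
qed

lemma mass_quadrant_event_iff:
  assumes "1 \<le> L" "\<omega> \<in> space M - few_points L" "0 \<le> a" "0 \<le> b"
  defines "r\<^sub>a \<equiv> radius_of_mass a" and "r\<^sub>b \<equiv> radius_of_mass b"
  shows "a < kth_mass 1 \<omega> \<and> kth_mass L \<omega> \<le> b
           \<longleftrightarrow> card (Phi \<omega> \<inter> cball 0 r\<^sub>a) = 0 \<and> L \<le> card (Phi \<omega> \<inter> (cball 0 r\<^sub>b - cball 0 r\<^sub>a))"
proof -
  have "\<omega> \<in> space M - few_points 1" using assms(1,2) few_points_mono[of 1 L] by auto
  then have first: "a < kth_mass 1 \<omega> \<longleftrightarrow> card (Phi \<omega> \<inter> cball 0 r\<^sub>a) = 0"
    using kth_mass_le_iff[of \<omega> 1 a] assms(3) by (auto simp: ball_count_def r\<^sub>a_def not_le)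
  have last: "kth_mass L \<omega> \<le> b \<longleftrightarrow> L \<le> card (Phi \<omega> \<inter> cball 0 r\<^sub>b)"
    using kth_mass_le_iff[of \<omega> L b] assms(2,4) by (simp add: ball_count_def r\<^sub>b_def)
  have "finite (Phi \<omega> \<inter> cball 0 r\<^sub>a)" using assms(2) locally_finite by simp
  then have "Phi \<omega> \<inter> cball 0 r\<^sub>b = Phi \<omega> \<inter> (cball 0 r\<^sub>b - cball 0 r\<^sub>a)"
    if "card (Phi \<omega> \<inter> cball 0 r\<^sub>a) = 0"
    using that by auto
  then show ?thesis using first last by auto
qed

lemma prob_annulus_count_ge:
  assumes "1 \<le> L" "0 \<le> a" "0 \<le> b"
  shows "prob {\<omega> \<in> space M. L \<le> card (Phi \<omega> \<inter> (cball 0 (radius_of_mass b) - cball 0 (radius_of_mass a)))}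
           = erlang_CDF (L - 1) 1 (b - a)"
proof -
  define annulus where "annulus = cball (0::real \<times> real) (radius_of_mass b) - cball 0 (radius_of_mass a)"
  have "prob {\<omega> \<in> space M. L \<le> card (Phi \<omega> \<inter> annulus)} = erlang_CDF (L - 1) 1 (lam * measure lborel annulus)"
    unfolding annulus_def using assms(1) by (intro prob_count_ge) (auto intro: bounded_subset[OF bounded_cball])
  also have "\<dots> = erlang_CDF (L - 1) 1 (b - a)"
  proof (cases "a \<le> b")
    case True
    then show ?thesis
      using measure_cball_pair_diff[of "radius_of_mass a" "radius_of_mass b"] radius_of_mass_mono[OF True]
        mass_radius_of_mass[of a] mass_radius_of_mass[of b] radius_of_mass_nonneg[of a] assms
      by (simp add: annulus_def right_diff_distrib mult.assoc)
  next
    case False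
    then have "annulus = {}" using radius_of_mass_mono[of b a] by (auto simp: annulus_def)
    then show ?thesis using False by (simp add: erlang_CDF_at0 erlang_CDF_def[of _ _ "b - a"])
  qed
  finally show ?thesis by (simp add: annulus_def)
qed

lemma prob_first_last_mass_nonneg_quadrant:
  assumes "1 \<le> L" "0 \<le> a" "0 \<le> b"
  shows "prob {\<omega> \<in> space M. a < kth_mass 1 \<omega> \<and> kth_mass L \<omega> \<le> b} = exp (- a) * erlang_CDF (L - 1) 1 (b - a)"
proof -
  define r\<^sub>a where "r\<^sub>a = radius_of_mass a"
  define r\<^sub>b where "r\<^sub>b = radius_of_mass b"
  define disc_empty where "disc_empty = {\<omega> \<in> space M. card (Phi \<omega> \<inter> cball 0 r\<^sub>a) \<in> {0}}"
  define annulus_full where "annulus_full = {\<omega> \<in> space M. card (Phi \<omega> \<inter> (cball 0 r\<^sub>b - cball 0 r\<^sub>a)) \<in> {L..}}"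
  have "prob {\<omega> \<in> space M. a < kth_mass 1 \<omega> \<and> kth_mass L \<omega> \<le> b} = prob (disc_empty \<inter> annulus_full)"
  proof (rule measure_eq_AE)
    show "AE \<omega> in M. \<omega> \<in> {\<omega> \<in> space M. a < kth_mass 1 \<omega> \<and> kth_mass L \<omega> \<le> b}
        \<longleftrightarrow> \<omega> \<in> disc_empty \<inter> annulus_full"
      using AE_not_few_points[of L]
      by eventually_elim
         (use mass_quadrant_event_iff[OF assms(1) _ assms(2,3)] in
          \<open>auto simp: disc_empty_def annulus_full_def r\<^sub>a_def r\<^sub>b_def\<close>)
    show "{\<omega> \<in> space M. a < kth_mass 1 \<omega> \<and> kth_mass L \<omega> \<le> b} \<in> sets M" by measurable
    show "disc_empty \<inter> annulus_full \<in> sets M"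
      unfolding disc_empty_def annulus_full_def
      by (intro sets.Int sets_count_event) (auto intro: bounded_subset[OF bounded_cball])
  qed
  also have "\<dots> = prob disc_empty * prob annulus_full"
    unfolding disc_empty_def annulus_full_def
    by (intro prob_counts_indep) (auto intro: bounded_subset[OF bounded_cball])
  also have "prob disc_empty = exp (- a)"
    using prob_count_eq[of "cball 0 r\<^sub>a" 0] mass_radius_of_mass[of a] radius_of_mass_nonneg[of a] assms(2)
    by (simp add: disc_empty_def measure_cball_pair r\<^sub>a_def mult.assoc)
  also have "prob annulus_full = erlang_CDF (L - 1) 1 (b - a)"
    using prob_annulus_count_ge[OF assms] by (simp add: annulus_full_def r\<^sub>a_def r\<^sub>b_def)
  finally show ?thesis .
qed

lemma prob_first_last_mass_quadrant:
  assumes "1 \<le> L"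
  shows "prob {\<omega> \<in> space M. a < kth_mass 1 \<omega> \<and> kth_mass L \<omega> \<le> b} = order_cdf L a b"
proof -
  consider "b < 0" | "a < 0" "0 \<le> b" | "0 \<le> a" "0 \<le> b" by linarith
  then show ?thesis
  proof cases
    case 1
    then have empty: "{\<omega> \<in> space M. a < kth_mass 1 \<omega> \<and> kth_mass L \<omega> \<le> b} = {}"
      using kth_mass_nonneg[of L] by (auto simp: not_le intro: less_le_trans)
    show ?thesis unfolding empty using 1 by (simp add: order_cdf_def erlang_CDF_def)
  next
    case 2
    then have event: "{\<omega> \<in> space M. a < kth_mass 1 \<omega> \<and> kth_mass L \<omega> \<le> b} = {\<omega> \<in> space M. kth_mass L \<omega> \<le> b}"
      using kth_mass_nonneg[of 1] by (auto intro: less_le_trans)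
    show ?thesis unfolding event using 2 prob_last_mass_le[OF assms] by (simp add: order_cdf_def)
  next
    case 3
    then show ?thesis using prob_first_last_mass_nonneg_quadrant[OF assms] by (simp add: order_cdf_def)
  qed
qed

definition first_last_mass :: "nat \<Rightarrow> 'w \<Rightarrow> real \<times> real" where
  "first_last_mass L \<omega> = (kth_mass 1 \<omega>, kth_mass L \<omega>)"

lemma first_last_mass_measurable[measurable]: "first_last_mass L \<in> borel_measurable M"
proof -
  have "first_last_mass L \<in> measurable M (borel \<Otimes>\<^sub>M borel)"
    unfolding first_last_mass_def[abs_def] by measurable
  then show ?thesis by (simp add: borel_prod)
qed

lemma distr_first_last_mass:
  assumes "2 \<le> L"
  shows "distr M borel (first_last_mass L) = density lborel (\<lambda>p. ennreal (order_density L p))"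
proof (rule measure_eqI_quadrants)
  have emeasure_distr_eq: "emeasure (distr M borel (first_last_mass L)) {p. P p}
      = ennreal (prob {\<omega> \<in> space M. P (first_last_mass L \<omega>)})" if "Measurable.pred (borel \<Otimes>\<^sub>M borel) P" for P
    using Collect_pair_borel[OF that]
    by (subst emeasure_distr) (auto simp: emeasure_eq_measure vimage_def Int_def conj_commute)
  fix a b :: real
  show "emeasure (distr M borel (first_last_mass L)) {p. a < fst p \<and> snd p \<le> b}
      = emeasure (density lborel (\<lambda>p. ennreal (order_density L p))) {p. a < fst p \<and> snd p \<le> b}"
    using prob_first_last_mass_quadrant[of L a b] assms
    by (subst emeasure_distr_eq) (auto simp: first_last_mass_def emeasure_order_density_quadrant)
  have "{\<omega> \<in> space M. snd (first_last_mass L \<omega>) \<le> b} = {\<omega> \<in> space M. - 1 < kth_mass 1 \<omega> \<and> kth_mass L \<omega> \<le> b}"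
    using kth_mass_nonneg[of 1] by (auto simp: first_last_mass_def intro: less_le_trans[of "- 1" 0])
  then show "emeasure (distr M borel (first_last_mass L)) {p. snd p \<le> b}
      = emeasure (density lborel (\<lambda>p. ennreal (order_density L p))) {p. snd p \<le> b}"
    using prob_first_last_mass_quadrant[of L "- 1" b] assms
    by (subst emeasure_distr_eq) (auto simp: emeasure_order_density_below)
  show "emeasure (distr M borel (first_last_mass L)) {p. snd p \<le> b} \<noteq> \<infinity>"
    by (subst emeasure_distr_eq) auto
qed auto

lemma AE_first_mass_less_last_mass:
  assumes "2 \<le> L"
  shows "AE \<omega> in M. 0 < kth_mass 1 \<omega> \<and> kth_mass 1 \<omega> < kth_mass L \<omega>"
proof -
  have "AE p in distr M borel (first_last_mass L). 0 < fst p \<and> fst p < snd p"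
    unfolding distr_first_last_mass[OF assms]
    by (subst AE_density) (measurable, auto intro!: AE_I2 simp: order_density_def split: if_splits)
  then show ?thesis
    by (auto dest: AE_distrD[OF first_last_mass_measurable] simp: first_last_mass_def)
qed

lemma sir_ge_iff_first_last_mass:
  assumes "2 \<le> L" "0 < K" "\<omega> \<in> space M - few_points L"
    and ordered: "0 < kth_mass 1 \<omega>" "kth_mass 1 \<omega> < kth_mass L \<omega>"
  shows "1 / K \<le> sir_approx 4 1 lam (L - 1) (kth_radius 1 \<omega>) (kth_radius L \<omega>)
           \<longleftrightarrow> first_last_mass L \<omega> \<in> coverage_region L K"
proof -
  have "\<omega> \<in> space M - few_points 1" using assms(1,3) few_points_mono[of 1 L] by auto
  then have "0 \<le> kth_radius 1 \<omega>" "0 \<le> kth_radius L \<omega>"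
    using kth_radius_nonneg assms(3) by auto
  moreover have "kth_radius 1 \<omega> \<noteq> 0" using ordered(1) by (auto simp: kth_mass_def)
  moreover have "(kth_radius 1 \<omega>)^2 < (kth_radius L \<omega>)^2"
    using ordered(2) lam_pos by (simp add: kth_mass_def)
  ultimately have radii: "0 < kth_radius 1 \<omega>" "kth_radius 1 \<omega> < kth_radius L \<omega>"
    by (auto intro: power_less_imp_less_base)
  define t where "t = kth_mass L \<omega> / kth_mass 1 \<omega>"
  define D where "D = t^2 + (real L - 2) * t + kth_mass L \<omega>"
  have t_radii: "t = (kth_radius L \<omega>)^2 / (kth_radius 1 \<omega>)^2" using lam_pos by (simp add: t_def kth_mass_def)
  have sir: "sir_approx 4 1 lam (L - 1) (kth_radius 1 \<omega>) (kth_radius L \<omega>) = 1 / D"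
    unfolding sir_approx_alpha4[OF radii assms(1)] D_def t_radii by (simp add: kth_mass_def)
  have "0 < D" using ordered assms(1) by (simp add: D_def t_def add_pos_nonneg)
  then have reciprocal: "1 / K \<le> 1 / D \<longleftrightarrow> D \<le> K" using assms(2) by (simp add: field_simps)
  have region: "first_last_mass L \<omega> \<in> coverage_region L K \<longleftrightarrow> D \<le> K"
    using ordered by (simp add: first_last_mass_def coverage_region_def D_def t_def)
  show ?thesis by (simp only: sir reciprocal region)
qed

lemma prob_sir_ge:
  assumes "2 \<le> L" "0 < K"
  shows "ennreal (prob {\<omega> \<in> space M. 1 / K \<le> sir_approx 4 1 lam (L - 1) (kth_radius 1 \<omega>) (kth_radius L \<omega>)})
           = emeasure (density lborel (\<lambda>p. ennreal (order_density L p))) (coverage_region L K)"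
proof -
  have region: "coverage_region L K \<in> sets borel"
    by (rule Collect_pair_lborel[of "\<lambda>p. p \<in> coverage_region L K", simplified]) measurable
  have "prob {\<omega> \<in> space M. 1 / K \<le> sir_approx 4 1 lam (L - 1) (kth_radius 1 \<omega>) (kth_radius L \<omega>)}
      = prob (first_last_mass L -` coverage_region L K \<inter> space M)"
  proof (rule measure_eq_AE)
    show "AE \<omega> in M. \<omega> \<in> {\<omega> \<in> space M. 1 / K \<le> sir_approx 4 1 lam (L - 1) (kth_radius 1 \<omega>) (kth_radius L \<omega>)}
        \<longleftrightarrow> \<omega> \<in> first_last_mass L -` coverage_region L K \<inter> space M"
      using AE_first_mass_less_last_mass[OF assms(1)] AE_not_few_points[of L] AE_space
    proof eventually_elim
      case (elim \<omega>)
      then show ?case using sir_ge_iff_first_last_mass[OF assms, of \<omega>] by auto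
    qed
    show "{\<omega> \<in> space M. 1 / K \<le> sir_approx 4 1 lam (L - 1) (kth_radius 1 \<omega>) (kth_radius L \<omega>)} \<in> sets M"
      unfolding sir_approx_def by measurable
    show "first_last_mass L -` coverage_region L K \<inter> space M \<in> sets M"
      using region by (intro measurable_sets[OF first_last_mass_measurable])
  qed
  also have "ennreal \<dots> = emeasure (distr M borel (first_last_mass L)) (coverage_region L K)"
    using region by (simp add: emeasure_distr emeasure_eq_measure)
  finally show ?thesis by (simp add: distr_first_last_mass[OF assms(1)])
qed

end

section \<open>The coverage integral\<close>

lemma coverage_integrand_nonneg:
  assumes "2 \<le> L" "v \<in> {0..K - real (L - 1)}"
  shows "0 \<le> coverage_integrand L K v"
proof -
  have "1 \<le> coverage_threshold L K v" using one_le_coverage_threshold_iff[OF assms(1)] assms(2) by simp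
  then show ?thesis using assms(2) by (simp add: coverage_integrand_def)
qed

lemma coverage_integrand_continuous:
  assumes "2 \<le> L"
  shows "continuous_on {0..K - real (L - 1)} (coverage_integrand L K)"
proof -
  have "continuous_on {0..K - real (L - 1)} (coverage_threshold L K)"
    unfolding coverage_threshold_def by (intro continuous_intros)
  moreover have "coverage_threshold L K v \<noteq> 0" if "v \<in> {0..K - real (L - 1)}" for v
    using that one_le_coverage_threshold_iff[OF assms, of K v] by auto
  ultimately show ?thesis
    unfolding coverage_integrand_def by (intro continuous_intros) auto
qed

lemma integral_coverage_integrand_nonneg:
  assumes "2 \<le> L"
  shows "0 \<le> integral {0..K - real (L - 1)} (coverage_integrand L K)"
  using coverage_integrand_nonneg[OF assms] coverage_integrand_continuous[OF assms]
  by (intro integral_nonneg integrable_continuous_interval) auto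

lemma nn_integral_coverage_integrand:
  assumes "2 \<le> L" "0 < K - real (L - 1)"
  shows "(\<integral>\<^sup>+v. ennreal (indicator {0<..<K - real (L - 1)} v * coverage_integrand L K v) \<partial>lborel)
           = ennreal (integral {0..K - real (L - 1)} (coverage_integrand L K))"
proof -
  define m where "m = K - real (L - 1)"
  define g where "g v = (if v \<in> {0..m} then coverage_integrand L K v else 0)" for v
  have "AE v in lborel. v \<noteq> 0" "AE v in lborel. v \<noteq> m" by (rule AE_lborel_singleton)+
  then have "AE v in lborel. ennreal (indicator {0<..<m} v * coverage_integrand L K v) = ennreal (g v)"
    by eventually_elim (auto simp: g_def)
  then have "(\<integral>\<^sup>+v. ennreal (indicator {0<..<m} v * coverage_integrand L K v) \<partial>lborel)
      = (\<integral>\<^sup>+v. ennreal (g v) \<partial>lborel)"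
    by (rule nn_integral_cong_AE)
  also have "\<dots> = ennreal (integral {0..m} (coverage_integrand L K))"
  proof (rule nn_integral_has_integral_lborel)
    have "(coverage_integrand L K has_integral integral {0..m} (coverage_integrand L K)) {0..m}"
      using coverage_integrand_continuous[OF assms(1)]
      by (intro integrable_integral integrable_continuous_interval) (simp add: m_def)
    then show "(g has_integral integral {0..m} (coverage_integrand L K)) UNIV"
      unfolding g_def by (simp only: has_integral_restrict_UNIV)
    show "g \<in> borel_measurable borel"
      unfolding g_def coverage_integrand_def coverage_threshold_def by measurable
    show "0 \<le> g v" for v
      using coverage_integrand_nonneg[OF assms(1)] by (simp add: g_def m_def)
  qed
  finally show ?thesis by (simp add: m_def)
qed

text \<open>The substitution \<open>v = \<lambda>\<pi>r\<^sup>2\<close> turns the integral over \<open>\<lambda>\<pi>R\<^sub>L\<^sup>2\<close> into the paper's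
  integral over \<open>R\<^sub>L\<close>, with \<open>f\<close> the density of \<open>R\<^sub>L\<close>.\<close>
lemma coverage_integral_polar:
  fixes lam K :: real
  assumes "2 \<le> L" "0 < K - real (L - 1)" "0 < lam"
  defines "f \<equiv> \<lambda>r::real. exp (- lam * pi * r^2) * (2 * (lam * pi * r^2) ^ L) / (r * fact (L - 1))"
  shows "integral {0 .. sqrt ((K - real (L - 1)) / (pi * lam))}
            (\<lambda>r. (1 - 1 / (sqrt (K - pi * lam * r^2 + (real L - 2)^2 / 4) - (real L - 2) / 2)) ^ (L - 1) * f r)
         = integral {0..K - real (L - 1)} (coverage_integrand L K)"
proof -
  define r\<^sub>m where "r\<^sub>m = sqrt ((K - real (L - 1)) / (pi * lam))"
  have r\<^sub>m: "0 \<le> r\<^sub>m" "lam * pi * r\<^sub>m^2 = K - real (L - 1)"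
    using assms(2,3) by (simp_all add: r\<^sub>m_def)
  have "((\<lambda>r. (2 * lam * pi * r) *\<^sub>R coverage_integrand L K (lam * pi * r^2)) has_integral
      integral {lam * pi * 0^2 .. lam * pi * r\<^sub>m^2} (coverage_integrand L K)) {0..r\<^sub>m}"
  proof (rule has_integral_substitution[where c = 0 and d = "K - real (L - 1)"])
    show "(\<lambda>r. lam * pi * r^2) ` {0..r\<^sub>m} \<subseteq> {0..K - real (L - 1)}"
    proof safe
      fix r assume "r \<in> {0..r\<^sub>m}"
      then have "lam * pi * r^2 \<le> lam * pi * r\<^sub>m^2"
        using assms(3) by (intro mult_left_mono power_mono) auto
      then show "lam * pi * r^2 \<in> {0..K - real (L - 1)}" using r\<^sub>m assms(3) by simp
    qed
  qed (use r\<^sub>m assms(2,3) coverage_integrand_continuous[OF assms(1)] in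
       \<open>auto intro!: derivative_eq_intros\<close>)
  moreover have "(2 * lam * pi * r) *\<^sub>R coverage_integrand L K (lam * pi * r^2)
      = (1 - 1 / (sqrt (K - pi * lam * r^2 + (real L - 2)^2 / 4) - (real L - 2) / 2)) ^ (L - 1) * f r" for r
  proof (cases "r = 0")
    case False
    obtain n where "L = Suc n" using assms(1) by (cases L) auto
    then show ?thesis using False
      by (simp add: coverage_integrand_def coverage_threshold_def f_def field_simps power2_eq_square mult_ac)
  qed (simp add: f_def)
  ultimately show ?thesis using r\<^sub>m by (simp add: r\<^sub>m_def integral_unique)
qed

theorem corollary5:
  fixes M :: "'w measure" and Phi :: "'w \<Rightarrow> (real \<times> real) set"
    and lam \<gamma> \<beta> :: real and L :: nat
  assumes ppp: "poisson_pp M lam Phi"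
    and lam_pos: "lam > 0" and gam_pos: "\<gamma> > 0" and beta_pos: "\<beta> > 0"
    and L_ge: "L \<ge> 2"
  defines "P \<equiv> measure M {\<omega> \<in> space M.
               sir_approx 4 1 lam (L - 1) (kth_dist (Phi \<omega>) 1) (kth_dist (Phi \<omega>) L) \<ge> \<beta> / \<gamma>}"
    and "f \<equiv> (\<lambda>r::real. exp (- lam * pi * r^2) * (2 * (lam * pi * r^2) ^ L) / (r * fact (L - 1)))"
  shows "(\<beta> < \<gamma> / real (L - 1) \<longrightarrow>
            P = integral {0 .. sqrt ((\<gamma> / \<beta> - real (L - 1)) / (pi * lam))}
                  (\<lambda>r. (1 - 1 / (sqrt (\<gamma> / \<beta> - pi * lam * r^2 + (real L - 2)^2 / 4)
                                   - (real L - 2) / 2)) ^ (L - 1) * f r))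
       \<and> (\<beta> \<ge> \<gamma> / real (L - 1) \<longrightarrow> P = 0)"
proof -
  interpret planar_ppp M lam Phi using ppp lam_pos by unfold_locales
  define K where "K = \<gamma> / \<beta>"
  have P: "ennreal P = (\<integral>\<^sup>+v. ennreal (indicator {0<..<K - real (L - 1)} v * coverage_integrand L K v) \<partial>lborel)"
    using prob_sir_ge[OF L_ge, of K] emeasure_coverage_region[OF L_ge, of K] gam_pos beta_pos
    by (simp add: P_def K_def kth_radius_def)
  have range_iff: "0 < K - real (L - 1) \<longleftrightarrow> \<beta> < \<gamma> / real (L - 1)"
    using L_ge beta_pos by (simp add: K_def field_simps)
  have "P = integral {0..K - real (L - 1)} (coverage_integrand L K)" if "0 < K - real (L - 1)"
    using P nn_integral_coverage_integrand[OF L_ge that] integral_coverage_integrand_nonneg[OF L_ge]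
    by (simp add: P_def)
  moreover have "P = 0" if "K - real (L - 1) \<le> 0"
    using P that by (simp add: P_def)
  ultimately show ?thesis
    using range_iff coverage_integral_polar[OF L_ge _ lam_pos, of K] by (auto simp: K_def f_def not_less)
qed

end
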